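(* For each $k\in\{1,\dots,n-1\}$, the set $\phi(\mathcal{S}_k)$ is a basis of the $\mathbb{C}(q)$-vector space $H_k$. In particular, for $k=1$, $\{e_1,\dots,e_{n-1}\}$ is a basis of $H_1$.
   Context: Let $U=U_q(\mathfrak{gl}(1|1))$ be the unital superalgebra over $\mathbb{C}(q)$ generated by odd elements $E,F$ and even elements $\mathbf q^h$ ($h\in P^*=\mathbb{Z}h_1\oplus\mathbb{Z}h_2$) with relations $\mathbf q^0=1$, $\mathbf q^h\mathbf q^{h'}=\mathbf q^{h+h'}$, $\mathbf q^hE=q^{\langle h,\alpha\rangle}E\mathbf q^h$, $\mathbf q^hF=q^{-\langle h,\alpha\rangle}F\mathbf q^h$, $EF+FE=\frac{K-K^{-1}}{q-q^{-1}}$ with $K=\mathbf q^{h_1+h_2}$, $E^2=F^2=0$; here $P=\mathbb{Z}\epsilon_1\oplus\mathbb{Z}\epsilon_2$ with $\{\epsilon_1,\epsilon_2\}$ dual to $\{h_1,h_2\}$ and $\alpha=\epsilon_1-\epsilon_2$. Comultiplication: $\Delta(E)=E\otimes K^{-1}+1\otimes E$, $\Delta(F)=F\otimes1+K\otimes F$, $\Delta(\mathbf q^h)=\mathbf q^h\otimes\mathbf q^h$; on tensor products one uses the Koszul sign rule $(X\otimes Y)(a\otimes b)=(-1)^{|Y||a|}Xa\otimes Yb$. $V$ has basis $v_0$ (even), $v_1$ (odd) with $Ev_0=0,Ev_1=v_0,Fv_0=v_1,Fv_1=0$, $\mathbf q^hv_0=q^{\langle h,\epsilon_1\rangle}v_0$,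 $\mathbf q^hv_1=q^{\langle h,\epsilon_2\rangle}v_1$. Fix $n\ge2$; $U$ acts on $V^{\otimes m}$ via iterated comultiplication. For $0\le k\le n-1$, $H_k=\{v\in V^{\otimes n}: Ev=0,\ \mathbf q^hv=q^{\langle h,(n-k)\epsilon_1+k\epsilon_2\rangle}v\ \forall h\in P^*\}$. For $1\le i\le n-1$, $e_i=v_0^{\otimes(i-1)}\otimes(q^{-1}v_0\otimes v_1-v_1\otimes v_0)\otimes v_0^{\otimes(n-1-i)}$. $\mathcal{S}_k$ is the set of strings $s=(a_1,b_1,a_2,b_2,\dots,b_l,a_{l+1})$ ($l\ge0$) of nonnegative integers with all $b_i\ge2$, $\sum_{i=1}^l(b_i-1)=k$ and $\sum_{i=1}^{l+1}a_i+\sum_{i=1}^lb_i=n$; and $\phi(s)=v_0^{\otimes a_1}\otimes E(v_1^{\otimes b_1})\otimes v_0^{\otimes a_2}\otimes\cdots\otimes E(v_1^{\otimes b_l})\otimes v_0^{\otimes a_{l+1}}\in V^{\otimes n}$, where $E(v_1^{\otimes b})$ is computed in $V^{\otimes b}$ and factors $v_0^{\otimes 0}$ are omitted. *)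

theory Defs
  imports Complex_Main "HOL-Computational_Algebra.Polynomial"
    "HOL-Computational_Algebra.Fraction_Field" "HOL-Library.Function_Algebras"
begin

type_synonym fld = "complex poly fract"

definition qq :: fld where "qq = Fract [:0, 1:] 1"

(* Vectors of V^{\<otimes>m}: coefficient functions on basis words.
   A word is a bool list; False = v_0 (even), True = v_1 (odd).
   The basis word [x_1,...,x_m] stands for v_{x_1} \<otimes> ... \<otimes> v_{x_m}. *)
type_synonym vec = "bool list \<Rightarrow> fld"

definition scaleV :: "fld \<Rightarrow> vec \<Rightarrow> vec" where
  "scaleV c f = (\<lambda>w. c * f w)"

global_interpretation tv: vector_space scaleV
  by unfold_locales (auto simp: scaleV_def algebra_simps plus_fun_def)

definition Vt :: "nat \<Rightarrow> vec set" where
  "Vt m = {f. \<forall>w. length w \<noteq> m \<longrightarrow> f w = 0}"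

definition bvec :: "bool list \<Rightarrow> vec" where
  "bvec u = (\<lambda>w. if w = u then 1 else 0)"

(* tensor product of f \<in> V^{\<otimes>a} with g \<in> V^{\<otimes>b}, identified with V^{\<otimes>(a+b)} *)
definition tens :: "nat \<Rightarrow> vec \<Rightarrow> vec \<Rightarrow> vec" where
  "tens a f g = (\<lambda>w. if a \<le> length w then f (take a w) * g (drop a w) else 0)"

(* Action of E on V^{\<otimes>m} via iterated comultiplication, V^{\<otimes>(m+1)} = V \<otimes> V^{\<otimes>m}:
   \<Delta>(E) = E \<otimes> K^{-1} + 1 \<otimes> E, with Koszul signs; K acts on V^{\<otimes>m} by q^m
   (since K v_0 = q v_0, K v_1 = q v_1).  Writing f = v_0 \<otimes> f0 + v_1 \<otimes> f1:
   E f = v_0 \<otimes> (E f0 + q^{-m} f1) - v_1 \<otimes> E f1. *)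
fun Eop :: "nat \<Rightarrow> vec \<Rightarrow> vec" where
  "Eop 0 f = (\<lambda>w. 0)"
| "Eop (Suc m) f = (\<lambda>w. case w of
      [] \<Rightarrow> 0
    | x # r \<Rightarrow> (if x then - Eop m (\<lambda>u. f (True # u)) r
               else Eop m (\<lambda>u. f (False # u)) r + qq powi (- int m) * f (True # r)))"

(* Action of q^h, h = c1 h_1 + c2 h_2 (encoded as (c1,c2)), on V^{\<otimes>m} via
   \<Delta>(q^h) = q^h \<otimes> q^h;  q^h v_0 = q^{c1} v_0,  q^h v_1 = q^{c2} v_1. *)
fun Qh :: "int \<times> int \<Rightarrow> nat \<Rightarrow> vec \<Rightarrow> vec" where
  "Qh h 0 f = f"
| "Qh h (Suc m) f = (\<lambda>w. case w of
      [] \<Rightarrow> 0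
    | x # r \<Rightarrow> qq powi (if x then snd h else fst h) * Qh h m (\<lambda>u. f (x # u)) r)"

(* H_k: highest weight vectors of weight (n-k) \<epsilon>_1 + k \<epsilon>_2 in V^{\<otimes>n} *)
definition Hk :: "nat \<Rightarrow> nat \<Rightarrow> vec set" where
  "Hk n k = {v \<in> Vt n. Eop n v = (\<lambda>w. 0) \<and>
     (\<forall>c1 c2. Qh (c1, c2) n v = scaleV (qq powi (c1 * int (n - k) + c2 * int k)) v)}"

(* e_i = v_0^{\<otimes>(i-1)} \<otimes> (q^{-1} v_0 \<otimes> v_1 - v_1 \<otimes> v_0) \<otimes> v_0^{\<otimes>(n-1-i)} *)
definition ei :: "nat \<Rightarrow> nat \<Rightarrow> vec" where
  "ei n i = tens (i + 1)
     (tens (i - 1) (bvec (replicate (i - 1) False))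
        (scaleV (inverse qq) (bvec [False, True]) - bvec [True, False]))
     (bvec (replicate (n - 1 - i) False))"

(* Strings s = (a_1,b_1,a_2,...,b_l,a_{l+1}) encoded as nat lists of odd length:
   even positions hold the a's, odd positions hold the b's. *)
definition Strings :: "nat \<Rightarrow> nat \<Rightarrow> nat list set" where
  "Strings n k = {s. odd (length s) \<and> (\<forall>i < length s. odd i \<longrightarrow> 2 \<le> s ! i)
      \<and> (\<Sum>i \<in> {i. i < length s \<and> odd i}. s ! i - 1) = k
      \<and> sum_list s = n}"

(* \<phi>(s) = v_0^{a_1} \<otimes> E(v_1^{\<otimes>b_1}) \<otimes> v_0^{a_2} \<otimes> ... \<otimes> v_0^{a_{l+1}} *)
fun phi :: "nat list \<Rightarrow> vec" where
  "phi [] = (\<lambda>w. 0)"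
| "phi [a] = bvec (replicate a False)"
| "phi (a # b # rest) =
     tens (a + b) (tens a (bvec (replicate a False)) (Eop b (bvec (replicate b True))))
       (phi rest)"

end

(*
  Each \<phi>(s) is a weight vector of the right weight, and E kills it: E^2 = 0, and E obeys a
  Leibniz rule on tensor products whose right factor is killed by E.  Order basis words
  lexicographically with v\<^sub>0 < v\<^sub>1.  The smallest word in the support of \<phi>(s) is obtained by
  replacing each E(v\<^sub>1^\<otimes>b) by v\<^sub>0 \<otimes> v\<^sub>1^\<otimes>(b-1); these leading words are pairwise distinct,
  so the \<phi>(s) are linearly independent, and they are exactly the words of weight
  (n-k)\<epsilon>\<^sub>1 + k\<epsilon>\<^sub>2 that begin with v\<^sub>0.  Since the coefficient of E v at v\<^sub>0 \<otimes> r involves the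
  coefficient of v at v\<^sub>1 \<otimes> r, a vector of H\<^sub>k is determined by its coefficients at words
  beginning with v\<^sub>0, and triangular elimination against the \<phi>(s) shows that they span H\<^sub>k.
  For k = 1 the strings are (i-1, 2, n-1-i), whose \<phi> is e\<^sub>i.
*)

theory Submission
  imports Defs "HOL-Library.List_Lexorder"
begin

lemma sum_fun_apply: "(sum f A) x = (\<Sum>a\<in>A. f a x)"
  by (induction A rule: infinite_finite_induct) auto

lemma qq_nonzero: "qq \<noteq> 0"
  by (simp add: qq_def eq_fract Zero_fract_def)

lemma qq_power_inject: "qq ^ a = qq ^ b \<Longrightarrow> a = b"
proof -
  assume eq: "qq ^ a = qq ^ b"
  have power: "qq ^ m = Fract ([:0, 1:] ^ m) 1" for m
    by (induction m) (simp_all add: qq_def One_fract_def)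
  have "([:0, 1:] :: complex poly) ^ a = [:0, 1:] ^ b"
    using eq unfolding power by (simp add: eq_fract)
  then have "degree (([:0, 1:] :: complex poly) ^ a) = degree (([:0, 1:] :: complex poly) ^ b)"
    by simp
  then show ?thesis by (simp add: degree_power_eq)
qed

section \<open>The operator \<open>E\<close>\<close>

lemma Eop_Suc_True: "Eop (Suc m) f (True # r) = - Eop m (\<lambda>u. f (True # u)) r"
  by simp

lemma Eop_Suc_False:
  "Eop (Suc m) f (False # r) = Eop m (\<lambda>u. f (False # u)) r + qq powi (- int m) * f (True # r)"
  by simp

lemma Eop_linear: "Eop m (\<lambda>w. a * f w + b * g w) = (\<lambda>w. a * Eop m f w + b * Eop m g w)"
proof (induction m arbitrary: f g)
  case 0
  then show ?case by simp
next
  case (Suc m)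
  show ?case
  proof
    fix w
    show "Eop (Suc m) (\<lambda>w. a * f w + b * g w) w = a * Eop (Suc m) f w + b * Eop (Suc m) g w"
      using Suc[of "\<lambda>u. f (True # u)" "\<lambda>u. g (True # u)"]
        Suc[of "\<lambda>u. f (False # u)" "\<lambda>u. g (False # u)"]
      by (cases w) (auto simp: algebra_simps fun_eq_iff)
  qed
qed

lemma Eop_add: "Eop m (\<lambda>w. f w + g w) = (\<lambda>w. Eop m f w + Eop m g w)"
  using Eop_linear[of m 1 f 1 g] by simp

lemma Eop_scale: "Eop m (\<lambda>w. a * f w) = (\<lambda>w. a * Eop m f w)"
  using Eop_linear[of m a f 0 f] by simp

lemma Eop_zero: "Eop m (\<lambda>w. 0) = (\<lambda>w. 0)"
  using Eop_scale[of m 0 "\<lambda>w. 0"] by simp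

lemma Eop_neg: "Eop m (\<lambda>w. - f w) = (\<lambda>w. - Eop m f w)"
  using Eop_scale[of m "-1" f] by simp

lemma Eop_Eop: "Eop m (Eop m f) = (\<lambda>w. 0)"
proof (induction m arbitrary: f)
  case 0
  then show ?case by simp
next
  case (Suc m)
  have True_part: "(\<lambda>u. Eop (Suc m) f (True # u)) = (\<lambda>u. - Eop m (\<lambda>u. f (True # u)) u)"
    by simp
  have False_part: "(\<lambda>u. Eop (Suc m) f (False # u))
      = (\<lambda>u. Eop m (\<lambda>u. f (False # u)) u + qq powi (- int m) * f (True # u))"
    by simp
  show ?case
  proof
    fix w
    show "Eop (Suc m) (Eop (Suc m) f) w = 0"
    proof (cases w)
      case Nil
      then show ?thesis by simp
    next
      case (Cons x r)
      show ?thesis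
        using Cons Suc[of "\<lambda>u. f (True # u)"] Suc[of "\<lambda>u. f (False # u)"]
        by (simp only: Eop.simps list.case True_part False_part)
          (simp add: Eop_add Eop_scale Eop_neg fun_eq_iff)
    qed
  qed
qed

lemma Eop_replicate_False: "Eop a (bvec (replicate a False)) = (\<lambda>w. 0)"
proof (induction a)
  case 0
  then show ?case by simp
next
  case (Suc a)
  have True_part: "(\<lambda>u. bvec (replicate (Suc a) False) (True # u)) = (\<lambda>u. 0)"
    by (simp add: bvec_def)
  have False_part: "(\<lambda>u. bvec (replicate (Suc a) False) (False # u)) = bvec (replicate a False)"
    by (simp add: bvec_def fun_eq_iff)
  show ?case
  proof
    fix w
    show "Eop (Suc a) (bvec (replicate (Suc a) False)) w = 0"
    proof (cases w)
      case Nil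
      then show ?thesis by simp
    next
      case (Cons x r)
      show ?thesis
        by (cases x) (simp_all only: Cons Eop_Suc_True Eop_Suc_False True_part False_part Suc Eop_zero,
          simp_all add: bvec_def)
    qed
  qed
qed

section \<open>Weight vectors\<close>

definition weight_vec :: "nat \<Rightarrow> nat \<Rightarrow> vec \<Rightarrow> bool" where
  "weight_vec m j f \<longleftrightarrow> (\<forall>w. f w \<noteq> 0 \<longrightarrow> length w = m \<and> count_list w True = j)"

lemma weight_vec_bvec: "weight_vec (length u) (count_list u True) (bvec u)"
  by (simp add: weight_vec_def bvec_def)

lemma weight_vec_tens:
  "weight_vec a j f \<Longrightarrow> weight_vec b i g \<Longrightarrow> weight_vec (a + b) (j + i) (tens a f g)"
  unfolding weight_vec_def tens_def
proof (intro allI impI)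
  fix w
  assume "\<forall>w. f w \<noteq> 0 \<longrightarrow> length w = a \<and> count_list w True = j"
    "\<forall>w. g w \<noteq> 0 \<longrightarrow> length w = b \<and> count_list w True = i"
    "(if a \<le> length w then f (take a w) * g (drop a w) else 0) \<noteq> 0"
  then have "length (take a w) = a" "count_list (take a w) True = j"
    "length (drop a w) = b" "count_list (drop a w) True = i"
    by (auto split: if_splits)
  then show "length w = a + b \<and> count_list w True = j + i"
    by (metis append_take_drop_id count_list_append length_append)
qed

lemma weight_vec_Cons:
  "weight_vec (Suc m) j f \<Longrightarrow> weight_vec m (j - (if x then 1 else 0)) (\<lambda>u. f (x # u))"
  unfolding weight_vec_def by (cases x) force+

lemma Eop_support:
  "weight_vec m j f \<Longrightarrow> Eop m f w \<noteq> 0 \<Longrightarrow> length w = m \<and> Suc (count_list w True) = j"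
proof (induction m arbitrary: f j w)
  case 0
  then show ?case by simp
next
  case (Suc m)
  show ?case
  proof (cases w)
    case Nil
    then show ?thesis using Suc by simp
  next
    case (Cons x r)
    show ?thesis
    proof (cases x)
      case True
      then have "Eop m (\<lambda>u. f (True # u)) r \<noteq> 0" using Suc.prems(2) Cons by simp
      from Suc.IH[OF weight_vec_Cons[OF Suc.prems(1)] this] show ?thesis
        using Cons True by auto
    next
      case False
      then have "Eop m (\<lambda>u. f (False # u)) r \<noteq> 0 \<or> f (True # r) \<noteq> 0"
        using Suc.prems(2) Cons by auto
      then show ?thesis
      proof
        assume "Eop m (\<lambda>u. f (False # u)) r \<noteq> 0"
        from Suc.IH[OF weight_vec_Cons[OF Suc.prems(1)] this] show ?thesis
          using Cons False by simp
      next
        assume "f (True # r) \<noteq> 0"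
        then have "length (True # r) = Suc m \<and> count_list (True # r) True = j"
          using Suc.prems(1) unfolding weight_vec_def by blast
        then show ?thesis using Cons False by simp
      qed
    qed
  qed
qed

lemma weight_vec_Eop: "weight_vec m (Suc j) f \<Longrightarrow> weight_vec m j (Eop m f)"
  using Eop_support[of m "Suc j" f] by (simp add: weight_vec_def)

lemma Qh_apply:
  "Qh h m f w = (if m \<le> length w then
     qq powi (fst h * int (count_list (take m w) False) + snd h * int (count_list (take m w) True)) * f w
   else 0)"
proof (induction m arbitrary: f w)
  case 0
  then show ?case by simp
next
  case (Suc m)
  have powi_add: "qq powi (i + i') = qq powi i * qq powi i'" for i i'
    using qq_nonzero by (simp add: power_int_add)
  show ?case
    using Suc[of "\<lambda>u. f (hd w # u)" "tl w"]
    by (cases w; cases "hd w") (simp_all add: powi_add algebra_simps)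
qed

lemma weight_vec_Qh:
  assumes "weight_vec n k v"
  shows "Qh (c1, c2) n v = scaleV (qq powi (c1 * int (n - k) + c2 * int k)) v"
proof
  fix w
  show "Qh (c1, c2) n v w = scaleV (qq powi (c1 * int (n - k) + c2 * int k)) v w"
  proof (cases "v w = 0")
    case True
    then show ?thesis by (simp add: Qh_apply scaleV_def)
  next
    case False
    with assms have w: "length w = n" "count_list w True = k" by (auto simp: weight_vec_def)
    have "count_list w False + count_list w True = length w"
      by (induction w) auto
    with w have "int (count_list w False) = int n - int k" "k \<le> n" by auto
    with w show ?thesis by (simp add: Qh_apply scaleV_def)
  qed
qed

lemma Hk_eq: "Hk n k = {v. weight_vec n k v \<and> Eop n v = (\<lambda>w. 0)}"
proof (intro set_eqI iffI)
  fix v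
  assume "v \<in> {v. weight_vec n k v \<and> Eop n v = (\<lambda>w. 0)}"
  then show "v \<in> Hk n k" by (auto simp: Hk_def Vt_def weight_vec_def weight_vec_Qh)
next
  fix v
  assume v: "v \<in> Hk n k"
  have "weight_vec n k v" unfolding weight_vec_def
  proof (intro allI impI)
    fix w
    assume nz: "v w \<noteq> 0"
    then have len: "length w = n" using v by (auto simp: Hk_def Vt_def)
    text \<open>For \<open>h = h\<^sub>2\<close> the eigenvalue counts the factors \<open>v\<^sub>1\<close>.\<close>
    have "Qh (0, 1) n v w = scaleV (qq powi (0 * int (n - k) + 1 * int k)) v w"
      using v unfolding Hk_def by auto
    then have "qq ^ count_list w True * v w = qq ^ k * v w"
      using len by (simp add: Qh_apply scaleV_def)
    with nz len show "length w = n \<and> count_list w True = k"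
      using qq_power_inject by simp
  qed
  then show "v \<in> {v. weight_vec n k v \<and> Eop n v = (\<lambda>w. 0)}" using v by (auto simp: Hk_def)
qed

lemma Hk_subspace: "tv.subspace (Hk n k)"
  unfolding tv.subspace_def Hk_eq
proof (intro conjI ballI allI)
  show "0 \<in> {v. weight_vec n k v \<and> Eop n v = (\<lambda>w. 0)}"
    by (simp add: weight_vec_def zero_fun_def Eop_zero)
next
  fix x y
  assume "x \<in> {v. weight_vec n k v \<and> Eop n v = (\<lambda>w. 0)}" "y \<in> {v. weight_vec n k v \<and> Eop n v = (\<lambda>w. 0)}"
  moreover have "x w + y w \<noteq> 0 \<Longrightarrow> x w \<noteq> 0 \<or> y w \<noteq> 0" for w
    by auto
  ultimately show "x + y \<in> {v. weight_vec n k v \<and> Eop n v = (\<lambda>w. 0)}"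
    unfolding plus_fun_def by (auto simp: weight_vec_def Eop_add)
next
  fix c x
  assume "x \<in> {v. weight_vec n k v \<and> Eop n v = (\<lambda>w. 0)}"
  then show "scaleV c x \<in> {v. weight_vec n k v \<and> Eop n v = (\<lambda>w. 0)}"
    unfolding scaleV_def by (auto simp: weight_vec_def Eop_scale)
qed

section \<open>The Leibniz rule for \<open>E\<close>\<close>

lemma tens_Cons: "tens (Suc a) f g (x # u) = tens a (\<lambda>u. f (x # u)) g u"
  by (simp add: tens_def)

lemma tens_Cons_fun: "(\<lambda>u. tens (Suc a) f g (x # u)) = tens a (\<lambda>u. f (x # u)) g"
  by (simp add: tens_def fun_eq_iff)

lemma tens_neg: "tens a (\<lambda>u. - f u) g = (\<lambda>w. - tens a f g w)"
  by (simp add: tens_def fun_eq_iff)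

lemma tens_zero: "tens a (\<lambda>u. 0) g = (\<lambda>w. 0)"
  by (simp add: tens_def fun_eq_iff)

lemma tens_append: "length u = a \<Longrightarrow> tens a f g (u @ v) = f u * g v"
  by (simp add: tens_def)

lemma Eop_tens:
  assumes "Eop c Y = (\<lambda>w. 0)"
  shows "Eop (a + c) (tens a X Y) = tens a (Eop a X) (\<lambda>w. qq powi (- int c) * Y w)"
proof (induction a arbitrary: X)
  case 0
  have "tens 0 X Y = (\<lambda>w. X [] * Y w)" by (simp add: tens_def fun_eq_iff)
  then show ?case using assms by (simp add: Eop_scale tens_def fun_eq_iff)
next
  case (Suc a)
  have powi_add: "qq powi (- int a - int c) = qq powi (- int a) * qq powi (- int c)"
    using qq_nonzero power_int_add[of qq "- int a" "- int c"] by simp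
  have Suc_add: "Suc a + c = Suc (a + c)" by simp
  show ?case
  proof
    fix w
    show "Eop (Suc a + c) (tens (Suc a) X Y) w = tens (Suc a) (Eop (Suc a) X) (\<lambda>w. qq powi - int c * Y w) w"
    proof (cases w)
      case Nil
      then show ?thesis by (simp add: tens_def)
    next
      case (Cons x r)
      show ?thesis
      proof (cases x)
        case True
        have "Eop (Suc a + c) (tens (Suc a) X Y) (True # r)
            = - Eop (a + c) (tens a (\<lambda>u. X (True # u)) Y) r"
          unfolding Suc_add Eop_Suc_True tens_Cons_fun ..
        also have "\<dots> = tens (Suc a) (Eop (Suc a) X) (\<lambda>w. qq powi - int c * Y w) (True # r)"
          unfolding Suc tens_Cons Eop_Suc_True tens_neg ..
        finally show ?thesis using Cons True by simp
      next
        case False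
        have "Eop (Suc a + c) (tens (Suc a) X Y) (False # r)
            = Eop (a + c) (tens a (\<lambda>u. X (False # u)) Y) r
              + qq powi (- int (a + c)) * tens a (\<lambda>u. X (True # u)) Y r"
          unfolding Suc_add Eop_Suc_False tens_Cons_fun tens_Cons ..
        also have "\<dots> = tens (Suc a) (Eop (Suc a) X) (\<lambda>w. qq powi - int c * Y w) (False # r)"
          unfolding Suc tens_Cons Eop_Suc_False
          by (cases "a \<le> length r") (simp_all add: tens_def powi_add algebra_simps)
        finally show ?thesis using Cons False by simp
      qed
    qed
  qed
qed

section \<open>Strings and the vectors \<open>\<phi>(s)\<close>\<close>

text \<open>The conditions defining \<open>Strings\<close>, by recursion on the string instead of by indexing.\<close>

fun wf_string :: "nat list \<Rightarrow> bool" where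
  "wf_string [] = False"
| "wf_string [a] = True"
| "wf_string (a # b # rest) = (2 \<le> b \<and> wf_string rest)"

fun string_weight :: "nat list \<Rightarrow> nat" where
  "string_weight [] = 0"
| "string_weight [a] = 0"
| "string_weight (a # b # rest) = (b - 1) + string_weight rest"

lemma all_nat_split_Suc_Suc: "(\<forall>i. P i) \<longleftrightarrow> P 0 \<and> P 1 \<and> (\<forall>j. P (Suc (Suc j)))"
  by (metis One_nat_def not0_implies_Suc)

lemma odd_less_Suc_Suc:
  "{i. i < Suc (Suc L) \<and> odd i} = insert 1 ((\<lambda>j. Suc (Suc j)) ` {j. j < L \<and> odd j})"
proof (intro set_eqI iffI)
  fix i
  assume "i \<in> {i. i < Suc (Suc L) \<and> odd i}"
  then show "i \<in> insert 1 ((\<lambda>j. Suc (Suc j)) ` {j. j < L \<and> odd j})"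
    by (cases i rule: nat.exhaust; cases "i - 1" rule: nat.exhaust) auto
qed auto

lemma wf_string_iff: "odd (length s) \<and> (\<forall>i < length s. odd i \<longrightarrow> 2 \<le> s ! i) \<longleftrightarrow> wf_string s"
  and string_weight_eq: "odd (length s) \<Longrightarrow> (\<Sum>i \<in> {i. i < length s \<and> odd i}. s ! i - 1) = string_weight s"
proof (induction s rule: wf_string.induct)
  case (3 a b rest)
  {
    case 1
    have "(\<forall>i < length (a # b # rest). odd i \<longrightarrow> 2 \<le> (a # b # rest) ! i) \<longleftrightarrow>
        2 \<le> b \<and> (\<forall>i < length rest. odd i \<longrightarrow> 2 \<le> rest ! i)"
      by (subst all_nat_split_Suc_Suc) simp
    then show ?case using 3(1) by auto
  next
    case 2
    have inj: "inj_on (\<lambda>j. Suc (Suc j)) {j. j < length rest \<and> odd j}"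
      by (simp add: inj_on_def)
    have "(\<Sum>i \<in> {i. i < length (a # b # rest) \<and> odd i}. (a # b # rest) ! i - 1)
        = (b - 1) + (\<Sum>i \<in> {i. i < length rest \<and> odd i}. rest ! i - 1)"
      unfolding length_Cons odd_less_Suc_Suc
      by (subst sum.insert) (auto simp: sum.reindex[OF inj])
    then show ?case using 3(2) 2 by simp
  }
qed auto

lemma Strings_iff: "s \<in> Strings n k \<longleftrightarrow> wf_string s \<and> string_weight s = k \<and> sum_list s = n"
  using wf_string_iff[of s] string_weight_eq[of s] unfolding Strings_def by auto

lemma count_list_replicate [simp]: "count_list (replicate n x) y = (if x = y then n else 0)"
  by (induction n) auto

lemma weight_vec_E_replicate_True: "weight_vec b (b - 1) (Eop b (bvec (replicate b True)))"
proof (cases b)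
  case 0
  then show ?thesis by (simp add: weight_vec_def)
next
  case (Suc b')
  then have "weight_vec b (Suc b') (bvec (replicate b True))"
    using weight_vec_bvec[of "replicate b True"] by simp
  then have "weight_vec b b' (Eop b (bvec (replicate b True)))"
    by (rule weight_vec_Eop)
  then show ?thesis using Suc by (simp only: diff_Suc_1)
qed

lemma weight_vec_phi: "wf_string s \<Longrightarrow> weight_vec (sum_list s) (string_weight s) (phi s)"
proof (induction s rule: phi.induct)
  case 1
  then show ?case by simp
next
  case (2 a)
  then show ?case using weight_vec_bvec[of "replicate a False"] by simp
next
  case (3 a b rest)
  have "weight_vec a 0 (bvec (replicate a False))"
    using weight_vec_bvec[of "replicate a False"] by simp
  from weight_vec_tens[OF this weight_vec_E_replicate_True]
  have "weight_vec (a + b) (b - 1) (tens a (bvec (replicate a False)) (Eop b (bvec (replicate b True))))"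
    by simp
  from weight_vec_tens[OF this 3(1)] 3(2) show ?case by (simp add: add.assoc)
qed

lemma Eop_phi: "wf_string s \<Longrightarrow> Eop (sum_list s) (phi s) = (\<lambda>w. 0)"
proof (induction s rule: phi.induct)
  case 1
  then show ?case by simp
next
  case (2 a)
  then show ?case using Eop_replicate_False by simp
next
  case (3 a b rest)
  have "Eop (a + b) (tens a (bvec (replicate a False)) (Eop b (bvec (replicate b True)))) = (\<lambda>w. 0)"
    using Eop_tens[OF Eop_Eop[of b "bvec (replicate b True)"], of a "bvec (replicate a False)"]
    by (simp add: Eop_replicate_False tens_zero)
  then have "Eop ((a + b) + sum_list rest) (phi (a # b # rest)) = (\<lambda>w. 0)"
    using Eop_tens[of "sum_list rest" "phi rest" "a + b"] 3 by (simp add: tens_zero)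
  then show ?case by (simp add: add.assoc)
qed

lemma phi_in_Hk: "s \<in> Strings n k \<Longrightarrow> phi s \<in> Hk n k"
  unfolding Hk_eq Strings_iff using weight_vec_phi Eop_phi by auto

section \<open>Leading words\<close>

text \<open>Words are ordered lexicographically with \<open>v\<^sub>0 < v\<^sub>1\<close>.  The leading word of \<open>\<phi>(s)\<close> comes from
  replacing each factor \<open>E(v\<^sub>1\<^sup>\<otimes>b)\<close> by its smallest term \<open>v\<^sub>0 \<otimes> v\<^sub>1\<^sup>\<otimes>(b-1)\<close>.\<close>

definition is_leading_word :: "vec \<Rightarrow> bool list \<Rightarrow> bool" where
  "is_leading_word x w \<longleftrightarrow> x w \<noteq> 0 \<and> (\<forall>w'. x w' \<noteq> 0 \<longrightarrow> w \<le> w')"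

lemma is_leading_word_unique: "is_leading_word x w \<Longrightarrow> is_leading_word x w' \<Longrightarrow> w = w'"
  unfolding is_leading_word_def by (blast intro: order.antisym)

fun lead_word :: "nat list \<Rightarrow> bool list" where
  "lead_word [] = []"
| "lead_word [a] = replicate a False"
| "lead_word (a # b # rest) = replicate (Suc a) False @ replicate (b - 1) True @ lead_word rest"

lemma lead_word_Cons_Cons:
  "lead_word (a # b # rest) = replicate a False @ (False # replicate (b - 1) True) @ lead_word rest"
  by (simp add: replicate_app_Cons_same)

lemma Eop_replicate_True_leading:
  assumes "1 \<le> b"
  shows "Eop b (bvec (replicate b True)) (False # replicate (b - 1) True) \<noteq> 0"
proof -
  obtain b' where b: "b = Suc b'" using assms by (cases b) auto
  have "(\<lambda>u. bvec (replicate b True) (False # u)) = (\<lambda>u. 0)"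
    using b by (simp add: bvec_def)
  then show ?thesis
    using qq_nonzero unfolding b Eop_Suc_False by (simp add: b Eop_zero bvec_def)
qed

lemma phi_lead_word: "wf_string s \<Longrightarrow> phi s (lead_word s) \<noteq> 0"
proof (induction s rule: phi.induct)
  case 1
  then show ?case by simp
next
  case (2 a)
  then show ?case by (simp add: bvec_def)
next
  case (3 a b rest)
  then have b: "2 \<le> b" "wf_string rest" by auto
  have len: "length (replicate a False @ (False # replicate (b - 1) True)) = a + b"
    using b by simp
  have "phi (a # b # rest) (lead_word (a # b # rest)) =
      Eop b (bvec (replicate b True)) (False # replicate (b - 1) True) * phi rest (lead_word rest)"
    unfolding lead_word_Cons_Cons phi.simps append_assoc[symmetric] tens_append[OF len]
    by (simp add: tens_append bvec_def)
  then show ?case using Eop_replicate_True_leading[of b] b 3(1) by simp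
qed

lemma replicate_False_True_le:
  assumes "length u = b" "count_list u True = b - 1" "1 \<le> b"
  shows "False # replicate (b - 1) True \<le> u"
proof (cases u)
  case Nil
  then show ?thesis using assms by simp
next
  case (Cons x u')
  show ?thesis
  proof (cases x)
    case True
    then show ?thesis using Cons by simp
  next
    case False
    then have "count_list u' True = length u'" using assms Cons by simp
    then have "y = True" if "y \<in> set u'" for y
      using length_filter_less[OF that, of "(=) True"] by (auto simp: count_list_eq_length_filter)
    then have "u' = replicate (length u') True"
      using replicate_eqI[of u' "length u'" True] by blast
    moreover have "b - 1 = length u'" using assms(1) Cons by simp
    ultimately show ?thesis using Cons False by simp
  qed
qed

lemma append_le_append_same_length:
  "length x = length y \<Longrightarrow> x \<le> y \<Longrightarrow> x' \<le> y' \<Longrightarrow> x @ x' \<le> y @ y'"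
proof (induction x arbitrary: y)
  case Nil
  then show ?case by simp
next
  case (Cons a x)
  then obtain b y0 where "y = b # y0" by (cases y) auto
  then show ?case using Cons by (auto simp: less_le_not_le)
qed

lemma lead_word_le: "wf_string s \<Longrightarrow> phi s w \<noteq> 0 \<Longrightarrow> lead_word s \<le> w"
proof (induction s arbitrary: w rule: phi.induct)
  case 1
  then show ?case by simp
next
  case (2 a)
  then show ?case by (simp add: bvec_def split: if_splits)
next
  case (3 a b rest)
  then have b: "2 \<le> b" "wf_string rest" by auto
  define u where "u = take (a + b) w"
  have "w = u @ drop (a + b) w" by (simp add: u_def)
  then have w: "w = take a u @ drop a u @ drop (a + b) w"
    by (metis append_take_drop_id append.assoc)
  have ab: "a + b \<le> length w" and
    pu: "tens a (bvec (replicate a False)) (Eop b (bvec (replicate b True))) u \<noteq> 0" and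
    pr: "phi rest (drop (a + b) w) \<noteq> 0"
    using 3(3) by (auto simp: tens_def u_def split: if_splits)
  have lu: "length u = a + b" using ab by (simp add: u_def)
  have "bvec (replicate a False) (take a u) \<noteq> 0" and
    E_nz: "Eop b (bvec (replicate b True)) (drop a u) \<noteq> 0"
    using pu lu by (auto simp: tens_def split: if_splits)
  then have tu: "take a u = replicate a False" by (simp add: bvec_def split: if_splits)
  have "length (drop a u) = b \<and> count_list (drop a u) True = b - 1"
    using weight_vec_E_replicate_True[of b] E_nz unfolding weight_vec_def by blast
  then have "False # replicate (b - 1) True \<le> drop a u"
    using b by (intro replicate_False_True_le) auto
  moreover have "lead_word rest \<le> drop (a + b) w" using 3(1) b pr by simp
  ultimately have "replicate a False @ (False # replicate (b - 1) True) @ lead_word rest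
      \<le> take a u @ drop a u @ drop (a + b) w"
    using tu lu b by (intro append_le_append_same_length) auto
  then show ?case using w lead_word_Cons_Cons by metis
qed

lemma is_leading_word_phi: "wf_string s \<Longrightarrow> is_leading_word (phi s) (lead_word s)"
  unfolding is_leading_word_def using phi_lead_word lead_word_le by blast

lemma lead_word_not_True: "lead_word s = [] \<or> (\<exists>r. lead_word s = False # r)"
proof (cases s rule: lead_word.cases)
  case (2 a)
  then show ?thesis by (cases a) auto
qed auto

lemma lead_word_Cons_Cons_True:
  "2 \<le> b \<Longrightarrow> lead_word (a # b # rest)
     = replicate (Suc a) False @ True # (replicate (b - 2) True @ lead_word rest)"
  by (simp add: numeral_2_eq_2 Suc_diff_Suc flip: replicate_Suc)

lemma replicate_False_True_inject:
  "replicate n False @ True # X = replicate n' False @ True # X' \<Longrightarrow> n = n' \<and> X = X'"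
proof (induction n arbitrary: n')
  case 0
  then show ?case by (cases n') auto
next
  case (Suc n)
  then show ?case by (cases n') auto
qed

lemma replicate_True_inject:
  "replicate m True @ Y = replicate m' True @ Y' \<Longrightarrow> Y = [] \<or> (\<exists>r. Y = False # r) \<Longrightarrow>
    Y' = [] \<or> (\<exists>r. Y' = False # r) \<Longrightarrow> m = m' \<and> Y = Y'"
proof (induction m arbitrary: m')
  case 0
  then show ?case by (cases m') auto
next
  case (Suc m)
  then show ?case by (cases m') auto
qed

lemma lead_word_inject: "wf_string s \<Longrightarrow> wf_string s' \<Longrightarrow> lead_word s = lead_word s' \<Longrightarrow> s = s'"
proof (induction s arbitrary: s' rule: lead_word.induct)
  case 1
  then show ?case by simp
next
  case (2 a)
  show ?case
  proof (cases s' rule: lead_word.cases)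
    case 1
    then show ?thesis using "2.prems" by simp
  next
    case (2 a')
    then show ?thesis using "2.prems" by simp
  next
    case (3 a' b' rest')
    then have "True \<in> set (lead_word s')" using "2.prems" by simp
    then have "True \<in> set (lead_word [a])" by (simp only: "2.prems"(3))
    then show ?thesis by simp
  qed
next
  case (3 a b rest)
  have b: "2 \<le> b" "wf_string rest" using "3.prems" by auto
  show ?case
  proof (cases s' rule: lead_word.cases)
    case 1
    then show ?thesis using "3.prems" by simp
  next
    case (2 a')
    have "True \<in> set (lead_word (a # b # rest))" using b by simp
    then have "True \<in> set (lead_word s')" unfolding "3.prems"(3) .
    then show ?thesis using 2 by simp
  next
    case (3 a' b' rest')
    have b': "2 \<le> b'" "wf_string rest'" using "3.prems" 3 by auto
    have "replicate (Suc a) False @ True # (replicate (b - 2) True @ lead_word rest)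
        = replicate (Suc a') False @ True # (replicate (b' - 2) True @ lead_word rest')"
      using "3.prems" 3 b b' by (simp only: lead_word_Cons_Cons_True)
    then have "a = a'" and
      "replicate (b - 2) True @ lead_word rest = replicate (b' - 2) True @ lead_word rest'"
      using replicate_False_True_inject by blast+
    with replicate_True_inject[OF this(2) lead_word_not_True lead_word_not_True]
    have "a = a'" "b = b'" "lead_word rest = lead_word rest'" using b b' by auto
    then show ?thesis using "3.IH"[OF b(2) b'(2)] 3 by simp
  qed
qed

lemma lead_word_surj: "w = [] \<or> (\<exists>r. w = False # r) \<Longrightarrow> \<exists>s. wf_string s \<and> lead_word s = w"
proof (induction w rule: length_induct)
  case (1 w)
  show ?case
  proof (cases w)
    case Nil
    then show ?thesis by (intro exI[of _ "[0]"]) simp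
  next
    case (Cons x u)
    then have x: "x = False" using "1.prems" by auto
    show ?thesis
    proof (cases "u = [] \<or> (\<exists>r. u = False # r)")
      case True
      then obtain s' where s': "wf_string s'" "lead_word s' = u" using "1.IH" Cons by auto
      text \<open>Prepend a \<open>v\<^sub>0\<close> by increasing \<open>a\<^sub>1\<close>.\<close>
      show ?thesis
      proof (cases s' rule: lead_word.cases)
        case 1
        then show ?thesis using s' by simp
      next
        case (2 a')
        then show ?thesis using s' Cons x by (intro exI[of _ "[Suc a']"]) auto
      next
        case (3 a' b' r)
        then show ?thesis using s' Cons x by (intro exI[of _ "Suc a' # b' # r"]) auto
      qed
    next
      case False
      text \<open>\<open>w = v\<^sub>0 v\<^sub>1\<^sup>j y\<close> with \<open>j \<ge> 1\<close> maximal: a new block with \<open>a\<^sub>1 = 0\<close> and \<open>b\<^sub>1 = j + 1\<close>.\<close>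
      define j where "j = length (takeWhile id u)"
      define y where "y = dropWhile id u"
      have "takeWhile id u = replicate j True"
        unfolding j_def by (rule replicate_length_same[symmetric]) (auto dest: set_takeWhileD)
      then have u: "u = replicate j True @ y"
        unfolding y_def by (metis takeWhile_dropWhile_id)
      have j: "1 \<le> j" using False unfolding j_def by (cases u) auto
      have "y = [] \<or> (\<exists>r. y = False # r)"
        unfolding y_def using hd_dropWhile[of id u] by (cases "dropWhile id u") auto
      moreover have "length y < length w" using u Cons j by simp
      ultimately obtain s where "wf_string s" "lead_word s = y" using "1.IH" by blast
      then show ?thesis
        using u Cons x j by (intro exI[of _ "0 # Suc j # s"]) simp
    qed
  qed
qed

section \<open>Triangularity\<close>

lemma independent_if_distinct_leading_words:
  assumes has_leading: "\<And>x. x \<in> X \<Longrightarrow> \<exists>w. is_leading_word x w"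
    and distinct: "\<And>x y w. x \<in> X \<Longrightarrow> y \<in> X \<Longrightarrow> is_leading_word x w \<Longrightarrow> is_leading_word y w \<Longrightarrow> x = y"
  shows "tv.independent X"
proof
  assume "tv.dependent X"
  then obtain t u where t: "finite t" "t \<subseteq> X" and sum_zero: "(\<Sum>v\<in>t. scaleV (u v) v) = 0"
    and nontrivial: "\<exists>v\<in>t. u v \<noteq> 0"
    unfolding tv.dependent_explicit by blast
  define ld where "ld x = (SOME w. is_leading_word x w)" for x
  have ld: "is_leading_word x (ld x)" if "x \<in> t" for x
    unfolding ld_def using has_leading that t(2) by (blast intro: someI_ex)
  text \<open>The smallest leading word among the vectors with nonzero coefficient occurs in no other vector.\<close>
  define t' where "t' = {v\<in>t. u v \<noteq> 0}"
  have fin: "finite (ld ` t')" and ne: "ld ` t' \<noteq> {}"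
    using t nontrivial by (auto simp: t'_def)
  define m where "m = Min (ld ` t')"
  obtain v1 where v1: "v1 \<in> t" "u v1 \<noteq> 0" "ld v1 = m"
    using Min_in[OF fin ne] unfolding m_def t'_def by auto
  have others: "u v * v m = 0" if "v \<in> t - {v1}" for v
  proof (rule ccontr)
    assume nz: "u v * v m \<noteq> 0"
    then have "m \<le> ld v" unfolding m_def using fin that by (auto simp: t'_def)
    moreover have "ld v \<le> m" using ld[of v] nz that unfolding is_leading_word_def by auto
    ultimately have "is_leading_word v m" using ld[of v] that by simp
    then have "v = v1" using distinct ld[of v1] v1 that t(2) by blast
    then show False using that by simp
  qed
  have "0 = (\<Sum>v\<in>t. scaleV (u v) v) m" using sum_zero by simp
  also have "\<dots> = u v1 * v1 m + (\<Sum>v\<in>t - {v1}. u v * v m)"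
    using t(1) v1(1) by (simp add: sum_fun_apply scaleV_def sum.remove)
  also have "\<dots> = u v1 * v1 m" using others by (simp add: sum.neutral)
  finally show False using v1 ld[of v1] unfolding is_leading_word_def by simp
qed

lemma subspace_subset_span_if_leading_words:
  assumes F: "finite F" and H: "tv.subspace H" "X \<subseteq> H"
    and determined: "\<And>v. v \<in> H \<Longrightarrow> \<forall>w\<in>F. v w = 0 \<Longrightarrow> v = 0"
    and leading: "\<And>w. w \<in> F \<Longrightarrow> \<exists>x\<in>X. is_leading_word x w"
  shows "H \<subseteq> tv.span X"
proof
  fix v
  assume "v \<in> H"
  then show "v \<in> tv.span X"
  proof (induction "card {w\<in>F. \<exists>w'\<in>F. w' \<le> w \<and> v w' \<noteq> 0}" arbitrary: v rule: less_induct)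
    case less
    show ?case
    proof (cases "\<forall>w\<in>F. v w = 0")
      case True
      then have "v = 0" using determined less.prems by blast
      then show ?thesis by (simp add: tv.span_zero)
    next
      case False
      define m where "m = Min {w\<in>F. v w \<noteq> 0}"
      have m: "m \<in> F" "v m \<noteq> 0" and m_le: "\<And>w. w \<in> F \<Longrightarrow> v w \<noteq> 0 \<Longrightarrow> m \<le> w"
        using F False Min_in[of "{w\<in>F. v w \<noteq> 0}"] by (auto simp: m_def)
      obtain x where x: "x \<in> X" "is_leading_word x m" using leading m(1) by blast
      define v' where "v' = v - scaleV (v m / x m) x"
      have v'_H: "v' \<in> H"
        unfolding v'_def using H x(1) less.prems by (blast intro: tv.subspace_diff tv.subspace_scale)
      have v'_above: "m < w" if "w \<in> F" "v' w \<noteq> 0" for w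
      proof -
        have "v w \<noteq> 0 \<or> x w \<noteq> 0" using that(2) by (auto simp: v'_def scaleV_def)
        then have "m \<le> w" using m_le[OF that(1)] x(2) unfolding is_leading_word_def by blast
        moreover have "v' m = 0"
          using x(2) unfolding v'_def is_leading_word_def scaleV_def by simp
        ultimately show ?thesis using that(2) by (cases "m = w") simp_all
      qed
      let ?U = "\<lambda>v. {w\<in>F. \<exists>w'\<in>F. w' \<le> w \<and> v w' \<noteq> 0}"
      have "?U v' \<subseteq> ?U v"
      proof
        fix w
        assume "w \<in> ?U v'"
        then obtain w' where "w \<in> F" "w' \<in> F" "w' \<le> w" "v' w' \<noteq> 0" by blast
        with v'_above have "m \<le> w" by (meson order.strict_trans2 order.strict_implies_order)
        with m \<open>w \<in> F\<close> show "w \<in> ?U v" by blast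
      qed
      moreover have "m \<in> ?U v" "m \<notin> ?U v'"
        using m v'_above by (auto dest: leD)
      ultimately have "card (?U v') < card (?U v)"
        using F by (intro psubset_card_mono) auto
      then have "v' \<in> tv.span X" using less.hyps v'_H by blast
      moreover have "scaleV (v m / x m) x \<in> tv.span X"
        using x(1) by (intro tv.span_scale tv.span_base)
      moreover have "v = v' + scaleV (v m / x m) x" by (simp add: v'_def)
      ultimately show ?thesis by (metis tv.span_add)
    qed
  qed
qed

section \<open>The basis of \<open>H\<^sub>k\<close>\<close>

lemma Eop_kernel_True_word:
  assumes "Eop (Suc m) v = (\<lambda>w. 0)" and "\<And>r. v (False # r) = 0"
  shows "v (True # r) = 0"
proof -
  have "(\<lambda>u. v (False # u)) = (\<lambda>u. 0)" using assms(2) by simp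
  moreover have "Eop m (\<lambda>u. v (False # u)) r + qq powi (- int m) * v (True # r) = 0"
    using assms(1) Eop_Suc_False[of m v r] by simp
  ultimately show ?thesis using qq_nonzero by (simp add: Eop_zero)
qed

lemma span_phi_subset_Hk: "tv.span (phi ` Strings n k) \<subseteq> Hk n k"
  by (rule tv.span_minimal) (auto intro: phi_in_Hk Hk_subspace)

lemma independent_phi: "tv.independent (phi ` Strings n k)"
proof (rule independent_if_distinct_leading_words)
  fix x
  assume "x \<in> phi ` Strings n k"
  then obtain s where "wf_string s" "x = phi s" by (auto simp: Strings_iff)
  then show "\<exists>w. is_leading_word x w" using is_leading_word_phi by blast
next
  fix x y w
  assume "x \<in> phi ` Strings n k" "y \<in> phi ` Strings n k"
    and leading: "is_leading_word x w" "is_leading_word y w"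
  then obtain s s' where s: "wf_string s" "x = phi s" and s': "wf_string s'" "y = phi s'"
    by (auto simp: Strings_iff)
  have "lead_word s = lead_word s'"
    using is_leading_word_unique is_leading_word_phi s s' leading by metis
  then show "x = y" using lead_word_inject s s' by blast
qed

lemma Hk_subset_span_phi:
  assumes "1 \<le> n"
  shows "Hk n k \<subseteq> tv.span (phi ` Strings n k)"
proof (rule subspace_subset_span_if_leading_words)
  let ?F = "{w. length w = n \<and> count_list w True = k \<and> (\<exists>r. w = False # r)}"
  show "finite ?F"
    by (rule finite_subset[OF _ finite_lists_length_eq[of UNIV n]]) auto
  show "tv.subspace (Hk n k)" by (rule Hk_subspace)
  show "phi ` Strings n k \<subseteq> Hk n k" using phi_in_Hk by blast
next
  fix v
  assume v: "v \<in> Hk n k" "\<forall>w\<in>{w. length w = n \<and> count_list w True = k \<and> (\<exists>r. w = False # r)}. v w = 0"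
  obtain m where n: "n = Suc m" using assms by (cases n) auto
  have weight: "weight_vec n k v" and E: "Eop n v = (\<lambda>w. 0)" using v(1) by (auto simp: Hk_eq)
  have False_words: "v (False # r) = 0" for r
    using weight v(2) unfolding weight_vec_def by blast
  have "v w = 0" for w
  proof (cases w)
    case Nil
    then show ?thesis using weight n unfolding weight_vec_def by auto
  next
    case (Cons x r)
    then show ?thesis
      using False_words Eop_kernel_True_word[of m v] E n by (cases x) auto
  qed
  then show "v = 0" by (simp add: fun_eq_iff)
next
  fix w
  assume w: "w \<in> {w. length w = n \<and> count_list w True = k \<and> (\<exists>r. w = False # r)}"
  then obtain s where s: "wf_string s" "lead_word s = w" using lead_word_surj by blast
  then have "phi s w \<noteq> 0" using phi_lead_word by blast
  then have "s \<in> Strings n k"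
    using w s weight_vec_phi[OF s(1)] unfolding weight_vec_def Strings_iff by auto
  then show "\<exists>x\<in>phi ` Strings n k. is_leading_word x w"
    using is_leading_word_phi s by blast
qed

lemma Eop_replicate_True_2:
  "Eop 2 (bvec (replicate 2 True)) = scaleV (inverse qq) (bvec [False, True]) - bvec [True, False]"
proof
  fix w
  show "Eop 2 (bvec (replicate 2 True)) w
      = (scaleV (inverse qq) (bvec [False, True]) - bvec [True, False]) w"
    unfolding numeral_2_eq_2
    by (cases w rule: list.exhaust; cases "tl w" rule: list.exhaust)
      (auto simp: bvec_def scaleV_def power_int_minus1_right)
qed

lemma ei_eq_phi: "1 \<le> i \<Longrightarrow> ei n i = phi [i - 1, 2, n - 1 - i]"
  by (simp add: ei_def Eop_replicate_True_2)

lemma Strings_1_iff: "s \<in> Strings n 1 \<longleftrightarrow> (\<exists>a c. s = [a, 2, c] \<and> a + 2 + c = n)"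
proof
  assume "s \<in> Strings n 1"
  then have s: "wf_string s" "string_weight s = 1" "sum_list s = n" by (auto simp: Strings_iff)
  then obtain a b rest where "s = a # b # rest" "b = 2" "string_weight rest = 0" "wf_string rest"
    by (cases s rule: wf_string.cases) auto
  moreover from this obtain c where "rest = [c]"
    by (cases rest rule: wf_string.cases) auto
  ultimately show "\<exists>a c. s = [a, 2, c] \<and> a + 2 + c = n" using s(3) by auto
next
  assume "\<exists>a c. s = [a, 2, c] \<and> a + 2 + c = n"
  then show "s \<in> Strings n 1" by (auto simp: Strings_iff)
qed

lemma ei_image: "ei n ` {1..n-1} = phi ` Strings n 1"
proof
  show "ei n ` {1..n-1} \<subseteq> phi ` Strings n 1"
  proof
    fix v
    assume "v \<in> ei n ` {1..n-1}"
    then obtain i where i: "1 \<le> i" "i \<le> n - 1" "v = ei n i" by auto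
    then have "[i - 1, 2, n - 1 - i] \<in> Strings n 1" unfolding Strings_1_iff by auto
    moreover have "v = phi [i - 1, 2, n - 1 - i]" using i(1,3) ei_eq_phi by simp
    ultimately show "v \<in> phi ` Strings n 1" by (rule rev_image_eqI)
  qed
  show "phi ` Strings n 1 \<subseteq> ei n ` {1..n-1}"
  proof
    fix v
    assume "v \<in> phi ` Strings n 1"
    then obtain s where "s \<in> Strings n 1" "v = phi s" by blast
    then obtain a c where ac: "v = phi [a, 2, c]" "a + 2 + c = n" unfolding Strings_1_iff by blast
    have "n - 1 - (a + 1) = c" using ac(2) by simp
    then have "v = ei n (a + 1)" using ac(1) ei_eq_phi[of "a + 1" n] by simp
    moreover have "a + 1 \<in> {1..n-1}" using ac by auto
    ultimately show "v \<in> ei n ` {1..n-1}" by blast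
  qed
qed

theorem proposition2p6:
  fixes n :: nat
  assumes "2 \<le> n"
  shows "(\<forall>k \<in> {1..n-1}. tv.independent (phi ` Strings n k)
            \<and> tv.span (phi ` Strings n k) = Hk n k)
       \<and> tv.independent (ei n ` {1..n-1}) \<and> tv.span (ei n ` {1..n-1}) = Hk n 1"
proof -
  have "tv.span (phi ` Strings n k) = Hk n k" for k
    using span_phi_subset_Hk[of n k] Hk_subset_span_phi[of n k] assms by auto
  then show ?thesis using independent_phi ei_image by simp
qed

end
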